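(* For every $x'\in\mathbb R^d$, $$\hat w^\top x'-\gamma(x')\;\le\; w^{*\top}_{\tilde C}x'\;\le\;\hat w^\top x'+\delta(x').$$
   Context: Let $\{(x_i,y_i)\}_{i=1}^n\subset\mathbb R^d\times\{-1,1\}$ be a training set. Let $\ell:\{-1,1\}\times\mathbb R\to\mathbb R$ be convex in its second argument, and set $\ell_i(w):=\ell(y_i,w^\top x_i)$ for $w\in\mathbb R^d$. For $C>0$ let $w^*_C$ be the (unique) minimizer over $w\in\mathbb R^d$ of $P_C(w)=\frac12\|w\|^2+C\sum_{i=1}^n\ell_i(w)$, where $\|\cdot\|$ is the Euclidean norm. Fix $\tilde C>0$ and an arbitrary vector $\hat w\in\mathbb R^d$; for each $i$ let $\xi_i\in\partial\ell_i(\hat w)$ be any subgradient of $\ell_i$ at $\hat w$, and set $g:=\hat w+\tilde C\sum_{i=1}^n\xi_i$. For $x\in\mathbb R^d$ define $\gamma(x):=\frac12(\|g\|\|x\|+g^\top x)$ and $\delta(x):=\frac12(\|g\|\|x\|-g^\top x)$. *)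

theory Defs
  imports "HOL-Analysis.Analysis"
begin

definition subgradient :: "('a::real_inner \<Rightarrow> real) \<Rightarrow> 'a \<Rightarrow> 'a set" where
  "subgradient f w = {xi. \<forall>v. f v \<ge> f w + inner xi (v - w)}"

end

theory Submission
  imports Defs
begin

text \<open>Let \<open>P w = \<parallel>w\<parallel>\<^sup>2/2 + F w\<close> with \<open>F\<close> convex. Since \<open>P\<close> is 1-strongly convex, its
  minimiser \<open>w\<^sup>*\<close> satisfies \<open>P w \<ge> P w\<^sup>* + \<parallel>w - w\<^sup>*\<parallel>\<^sup>2/2\<close>. Taking \<open>w = u\<close> for an
  arbitrary point \<open>u\<close> and bounding \<open>F u - F w\<^sup>*\<close> by a subgradient \<open>\<xi>\<close> of \<open>F\<close> at \<open>u\<close>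
  gives, for \<open>d = w\<^sup>* - u\<close> and \<open>g = u + \<xi>\<close>, the inequality \<open>\<parallel>d\<parallel>\<^sup>2 + g \<bullet> d \<le> 0\<close>: the
  minimiser lies in the ball with centre \<open>u - g/2\<close> and radius \<open>\<parallel>g\<parallel>/2\<close>. Cauchy-Schwarz
  bounds every linear functional on that ball, which is exactly the pair of bounds \<open>\<gamma>\<close>, \<open>\<delta>\<close>.\<close>

lemma convex_on_sum_fun:
  assumes "finite I" "convex S" "\<And>i. i \<in> I \<Longrightarrow> convex_on S (f i)"
  shows "convex_on S (\<lambda>x. \<Sum>i\<in>I. f i x)"
  using assms by (induction I rule: finite_induct) (auto simp: convex_on_const)

lemma convex_on_compose_inner_left:
  fixes a :: "'a::real_inner"
  assumes "convex_on UNIV h"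
  shows "convex_on UNIV (\<lambda>w. h (inner w a))"
proof (rule convex_onI)
  fix t :: real and v w :: 'a
  assume "0 < t" "t < 1"
  then show "h (inner ((1 - t) *\<^sub>R v + t *\<^sub>R w) a) \<le> (1 - t) * h (inner v a) + t * h (inner w a)"
    using convex_onD[OF assms, of t "inner v a" "inner w a"] by (simp add: inner_add_left)
qed simp

lemma subgradient_sum:
  assumes "finite I" "\<And>i. i \<in> I \<Longrightarrow> \<xi> i \<in> subgradient (f i) w"
  shows "(\<Sum>i\<in>I. \<xi> i) \<in> subgradient (\<lambda>v. \<Sum>i\<in>I. f i v) w"
proof -
  have "(\<Sum>i\<in>I. f i w) + inner (\<Sum>i\<in>I. \<xi> i) (v - w) \<le> (\<Sum>i\<in>I. f i v)" for v
  proof -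
    have "(\<Sum>i\<in>I. f i w + inner (\<xi> i) (v - w)) \<le> (\<Sum>i\<in>I. f i v)"
      using assms(2) by (intro sum_mono) (auto simp: subgradient_def)
    then show ?thesis by (simp add: sum.distrib inner_sum_left)
  qed
  then show ?thesis by (simp add: subgradient_def)
qed

lemma subgradient_cmul:
  assumes "0 \<le> c" "\<xi> \<in> subgradient f w"
  shows "c *\<^sub>R \<xi> \<in> subgradient (\<lambda>v. c * f v) w"
proof -
  have "c * f w + c * inner \<xi> (v - w) \<le> c * f v" for v
    using mult_left_mono[of "f w + inner \<xi> (v - w)" "f v" c] assms
    by (simp add: subgradient_def distrib_left)
  then show ?thesis by (simp add: subgradient_def)
qed

lemma norm_convex_combination_square:
  fixes a b :: "'a::real_inner"
  shows "norm ((1 - t) *\<^sub>R a + t *\<^sub>R b) ^ 2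
           = (1 - t) * norm a ^ 2 + t * norm b ^ 2 - t * (1 - t) * norm (b - a) ^ 2"
  by (simp add: power2_norm_eq_inner inner_add_left inner_add_right inner_diff_left
      inner_diff_right inner_commute algebra_simps)

lemma regularized_minimizer_quadratic_growth:
  fixes F :: "'a::real_inner \<Rightarrow> real"
  assumes F: "convex_on UNIV F"
    and min: "\<And>w. norm wstar ^ 2 / 2 + F wstar \<le> norm w ^ 2 / 2 + F w"
  shows "norm wstar ^ 2 / 2 + F wstar + norm (w - wstar) ^ 2 / 2 \<le> norm w ^ 2 / 2 + F w"
proof -
  define P where "P v = norm v ^ 2 / 2 + F v" for v
  have "norm (w - wstar) ^ 2 / 2 \<le> P w - P wstar"
  proof (rule field_le_mult_one_interval)
    fix z :: real
    assume z: "0 < z" "z < 1"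
    define t where "t = 1 - z"
    have t: "0 < t" "t < 1" using z by (auto simp: t_def)
    define wt where "wt = (1 - t) *\<^sub>R wstar + t *\<^sub>R w"
    have "F wt \<le> (1 - t) * F wstar + t * F w"
      using convex_onD[OF F, of t wstar w] t unfolding wt_def by simp
    moreover have "norm wt ^ 2
        = (1 - t) * norm wstar ^ 2 + t * norm w ^ 2 - t * (1 - t) * norm (w - wstar) ^ 2"
      unfolding wt_def by (rule norm_convex_combination_square)
    moreover have "P wstar \<le> P wt"
      using min unfolding P_def .
    ultimately have "t * ((1 - t) * (norm (w - wstar) ^ 2 / 2)) \<le> t * (P w - P wstar)"
      unfolding P_def by (simp add: field_simps)
    then show "z * (norm (w - wstar) ^ 2 / 2) \<le> P w - P wstar"
      using t by (simp add: t_def)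
  qed
  then show ?thesis
    unfolding P_def by linarith
qed

lemma regularized_minimizer_in_ball:
  fixes F :: "'a::real_inner \<Rightarrow> real"
  assumes F: "convex_on UNIV F"
    and min: "\<And>w. norm wstar ^ 2 / 2 + F wstar \<le> norm w ^ 2 / 2 + F w"
    and \<xi>: "\<xi> \<in> subgradient F what"
  shows "norm (wstar - (what - (1/2) *\<^sub>R (what + \<xi>))) \<le> norm (what + \<xi>) / 2"
proof -
  define g where "g = what + \<xi>"
  define d where "d = wstar - what"
  have "norm wstar ^ 2 / 2 + F wstar + norm d ^ 2 / 2 \<le> norm what ^ 2 / 2 + F what"
    using regularized_minimizer_quadratic_growth[OF F min, of what]
    by (simp add: d_def norm_minus_commute)
  moreover have "F what + inner \<xi> d \<le> F wstar"
    using \<xi> by (simp add: subgradient_def d_def)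
  moreover have "norm wstar ^ 2 = norm what ^ 2 + 2 * inner what d + norm d ^ 2"
    unfolding d_def by (simp add: power2_norm_eq_inner algebra_simps inner_commute)
  ultimately have "norm d ^ 2 + inner g d \<le> 0"
    by (simp add: g_def inner_add_left field_simps)
  moreover have "norm (d + (1/2) *\<^sub>R g) ^ 2 = norm d ^ 2 + inner g d + norm g ^ 2 / 4"
    by (simp add: power2_norm_eq_inner inner_add_left inner_add_right inner_commute algebra_simps)
  moreover have "(norm g / 2) ^ 2 = norm g ^ 2 / 4"
    by (simp add: power_divide)
  ultimately have "norm (d + (1/2) *\<^sub>R g) ^ 2 \<le> (norm g / 2) ^ 2"
    by linarith
  then have "norm (d + (1/2) *\<^sub>R g) \<le> norm g / 2"
    by (rule power2_le_imp_le) simp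
  then show ?thesis
    by (simp add: g_def d_def algebra_simps)
qed

lemma inner_bounds_of_dist_le:
  fixes v c x :: "'a::real_inner"
  assumes "norm (v - c) \<le> r"
  shows "inner c x - r * norm x \<le> inner v x \<and> inner v x \<le> inner c x + r * norm x"
proof -
  have "\<bar>inner (v - c) x\<bar> \<le> r * norm x"
    using Cauchy_Schwarz_ineq2[of "v - c" x] mult_right_mono[OF assms norm_ge_zero[of x]] by linarith
  then show ?thesis
    by (simp add: inner_diff_left abs_le_iff)
qed

theorem corollary1:
  fixes n :: nat
    and x :: "nat \<Rightarrow> real ^ 'd"
    and y :: "nat \<Rightarrow> real"
    and loss :: "real \<Rightarrow> real \<Rightarrow> real"
    and Ct :: real
    and what wstar :: "real ^ 'd"
    and xi :: "nat \<Rightarrow> real ^ 'd"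
    and x' :: "real ^ 'd"
  assumes y_pm: "\<And>i. i \<in> {1..n} \<Longrightarrow> y i \<in> {-1, 1}"
    and loss_convex: "\<And>t. t \<in> {-1, 1} \<Longrightarrow> convex_on UNIV (loss t)"
    and Ct_pos: "Ct > 0"
    and wstar_min: "\<And>w. (1/2) * norm wstar ^ 2 + Ct * (\<Sum>i=1..n. loss (y i) (inner wstar (x i)))
                        \<le> (1/2) * norm w ^ 2 + Ct * (\<Sum>i=1..n. loss (y i) (inner w (x i)))"
    and xi_sub: "\<And>i. i \<in> {1..n} \<Longrightarrow> xi i \<in> subgradient (\<lambda>w. loss (y i) (inner w (x i))) what"
  shows "let g = what + Ct *\<^sub>R (\<Sum>i=1..n. xi i);
             \<gamma> = (norm g * norm x' + inner g x') / 2;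
             \<delta> = (norm g * norm x' - inner g x') / 2
         in inner what x' - \<gamma> \<le> inner wstar x' \<and> inner wstar x' \<le> inner what x' + \<delta>"
proof -
  define F where "F w = Ct * (\<Sum>i=1..n. loss (y i) (inner w (x i)))" for w
  define g where "g = what + Ct *\<^sub>R (\<Sum>i=1..n. xi i)"
  have "convex_on UNIV F"
    unfolding F_def using Ct_pos y_pm
    by (intro convex_on_cmul convex_on_sum_fun convex_on_compose_inner_left loss_convex) auto
  moreover have "norm wstar ^ 2 / 2 + F wstar \<le> norm w ^ 2 / 2 + F w" for w
    using wstar_min[of w] by (simp add: F_def)
  moreover have "Ct *\<^sub>R (\<Sum>i=1..n. xi i) \<in> subgradient F what"
    unfolding F_def using Ct_pos xi_sub by (intro subgradient_cmul subgradient_sum) auto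
  ultimately have "norm (wstar - (what - (1/2) *\<^sub>R g)) \<le> norm g / 2"
    unfolding g_def by (rule regularized_minimizer_in_ball)
  from inner_bounds_of_dist_le[OF this, of x']
  show ?thesis
    unfolding g_def[symmetric] Let_def by (simp add: inner_diff_left field_simps)
qed

end
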